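(* Let $n\ge 2$, $A\in\mathrm{Mat}_{n\times n}(\mathbb{R})$, $q\in\mathbb{R}^n$ a formal equilibrium of the replicator field $X_A$, $B=-EAE^t$, $\eta_q(u)_i=q_i-\frac{e^{u_i}}{1+\sum_{j}e^{u_j}}$, and $\tilde Y_B(u)=(1+\sum_{i=1}^{n-1}e^{u_i})B\eta_q(u)$ on $\mathbb{R}^{n-1}$. Suppose $D=(d_{ij})\in\mathrm{Mat}_{(n-1)\times(n-1)}(\mathbb{R})$ is such that $DB$ is anti-symmetric and $D^tQ_1$ is diagonal, where $(Q_1)_{ij}=q_i-\delta_{ij}$, and let $H_D(u)=\sum_{i}\big(\sum_k d_{ki}q_k\big)u_i+\sum_i\big(\big(\sum_k d_{ki}q_k\big)-d_{ii}\big)e^{u_i}$. (1) If $B$ is invertible, then $\tilde Y_B$ is Hamiltonian with Hamiltonian $H_D$ with respect to the constant (pre)symplectic structure $\omega^\sharp=D^tB^{-1}$ (i.e. $\omega^\sharp\tilde Y_B=dH_D$); equivalently, the vector field $\frac{1}{x_n}X_A$ restricted to the interior of $\Delta^{n-1}$ is Hamiltonian with Hamiltonian $H_D\circ\phi^{-1}$ with respect to the presymplectic structure $\omega^\sharp=(d\phi^{-1})^tD^tB^{-1}(d\phi^{-1})$. (2) If $D^t$ is invertible, then $\tilde Y_B$ is Hamiltonian with Hamiltonian $H_D$ with respect to the constant Poisson structure $\pi^\sharp=B(D^t)^{-1}$ (i.e. $\tilde Y_B=\pi^\sharp dH_D$); equivalently, $\frac{1}{x_n}X_A$ restricted to the interior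 of $\Delta^{n-1}$ is Hamiltonian with Hamiltonian $H_D\circ\phi^{-1}$ with respect to the Poisson structure $\pi^\sharp=(d\phi)B(D^t)^{-1}(d\phi)^t$.
   Context: $X_A(x)_i=x_i((Ax)_i-x^tAx)$ on $\Delta^{n-1}=\{x\in\mathbb{R}^n_{\ge0}:\sum x_i=1\}$. A formal equilibrium is $q\in\mathbb{R}^n$ with $\sum q_i=1$ and all $(Aq)_i$ equal. $E=[-I_{n-1}\mid\mathbb{1}]$. $\phi:\mathbb{R}^{n-1}\to(\Delta^{n-1})^\circ$, $\phi(u)=\big(\frac{e^{u_1}}{1+\sum_j e^{u_j}},\dots,\frac{e^{u_{n-1}}}{1+\sum_j e^{u_j}},\frac{1}{1+\sum_j e^{u_j}}\big)$, a diffeomorphism with $\phi^{-1}(x)=(\log(x_i/x_n))_{i\le n-1}$; $d\phi$, $d\phi^{-1}$ denote Jacobians, and the structures on $(\Delta^{n-1})^\circ$ in the "equivalently" parts are the transports of the constant structures on $\mathbb{R}^{n-1}$ via $\phi$. For a 2-form $\omega$, $\omega^\sharp X=\omega(X,\cdot)$ and $X$ is Hamiltonian with Hamiltonian $H$ if $\omega^\sharp X=dH$; for a Poisson bivector $\pi$, $\pi^\sharp\alpha=\pi(\alpha,\cdot)$ and the Hamiltonian field of $H$ is $\pi^\sharp dH$. *)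

theory Defs
  imports "HOL-Analysis.Analysis"
begin

text \<open>Conventions: vectors in R^m are functions nat => real, only the entries with
index < m are meaningful; matrices are functions nat => nat => real, entry (i,j)
with 0-based indices.  The coordinate x_n of the paper is index n-1 here.\<close>

definition replicator :: "nat \<Rightarrow> (nat \<Rightarrow> nat \<Rightarrow> real) \<Rightarrow> (nat \<Rightarrow> real) \<Rightarrow> nat \<Rightarrow> real" where
  "replicator n A x i =
     x i * ((\<Sum>j<n. A i j * x j) - (\<Sum>k<n. \<Sum>j<n. x k * A k j * x j))"

definition formal_equilibrium :: "nat \<Rightarrow> (nat \<Rightarrow> nat \<Rightarrow> real) \<Rightarrow> (nat \<Rightarrow> real) \<Rightarrow> bool" where
  "formal_equilibrium n A q \<longleftrightarrow>
     (\<Sum>i<n. q i) = 1 \<and>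
     (\<forall>i<n. \<forall>j<n. (\<Sum>k<n. A i k * q k) = (\<Sum>k<n. A j k * q k))"

definition Emat :: "nat \<Rightarrow> nat \<Rightarrow> nat \<Rightarrow> real" where
  "Emat n i j = (if j = n - 1 then 1 else if i = j then -1 else 0)"

definition Bmat :: "nat \<Rightarrow> (nat \<Rightarrow> nat \<Rightarrow> real) \<Rightarrow> nat \<Rightarrow> nat \<Rightarrow> real" where
  "Bmat n A i j = - (\<Sum>k<n. \<Sum>l<n. Emat n i k * A k l * Emat n j l)"

definition eta :: "nat \<Rightarrow> (nat \<Rightarrow> real) \<Rightarrow> (nat \<Rightarrow> real) \<Rightarrow> nat \<Rightarrow> real" where
  "eta n q u i = q i - exp (u i) / (1 + (\<Sum>j<n - 1. exp (u j)))"

definition Ytilde :: "nat \<Rightarrow> (nat \<Rightarrow> nat \<Rightarrow> real) \<Rightarrow> (nat \<Rightarrow> real) \<Rightarrow> (nat \<Rightarrow> real) \<Rightarrow> nat \<Rightarrow> real" where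
  "Ytilde n A q u i =
     (1 + (\<Sum>j<n - 1. exp (u j))) * (\<Sum>j<n - 1. Bmat n A i j * eta n q u j)"

definition Q1 :: "(nat \<Rightarrow> real) \<Rightarrow> nat \<Rightarrow> nat \<Rightarrow> real" where
  "Q1 q i j = q i - (if i = j then 1 else 0)"

definition H_D :: "nat \<Rightarrow> (nat \<Rightarrow> nat \<Rightarrow> real) \<Rightarrow> (nat \<Rightarrow> real) \<Rightarrow> (nat \<Rightarrow> real) \<Rightarrow> real" where
  "H_D n D q u =
     (\<Sum>i<n - 1. (\<Sum>k<n - 1. D k i * q k) * u i) +
     (\<Sum>i<n - 1. ((\<Sum>k<n - 1. D k i * q k) - D i i) * exp (u i))"

definition phi :: "nat \<Rightarrow> (nat \<Rightarrow> real) \<Rightarrow> nat \<Rightarrow> real" where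
  "phi n u i =
     (if i < n - 1 then exp (u i) / (1 + (\<Sum>j<n - 1. exp (u j)))
      else if i = n - 1 then 1 / (1 + (\<Sum>j<n - 1. exp (u j)))
      else 0)"

definition phi_inv :: "nat \<Rightarrow> (nat \<Rightarrow> real) \<Rightarrow> nat \<Rightarrow> real" where
  "phi_inv n x i = (if i < n - 1 then ln (x i / x (n - 1)) else 0)"

definition simplex_interior :: "nat \<Rightarrow> (nat \<Rightarrow> real) set" where
  "simplex_interior n = {x. (\<forall>i<n. 0 < x i) \<and> (\<Sum>i<n. x i) = 1}"

definition partial_deriv :: "((nat \<Rightarrow> real) \<Rightarrow> real) \<Rightarrow> (nat \<Rightarrow> real) \<Rightarrow> nat \<Rightarrow> real" where
  "partial_deriv f p j = deriv (\<lambda>t. f (p(j := t))) (p j)"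

definition jacobian :: "((nat \<Rightarrow> real) \<Rightarrow> nat \<Rightarrow> real) \<Rightarrow> (nat \<Rightarrow> real) \<Rightarrow> nat \<Rightarrow> nat \<Rightarrow> real" where
  "jacobian F p i j = deriv (\<lambda>t. F (p(j := t)) i) (p j)"

definition is_inverse :: "nat \<Rightarrow> (nat \<Rightarrow> nat \<Rightarrow> real) \<Rightarrow> (nat \<Rightarrow> nat \<Rightarrow> real) \<Rightarrow> bool" where
  "is_inverse m M C \<longleftrightarrow>
     (\<forall>i<m. \<forall>j<m. (\<Sum>k<m. M i k * C k j) = (if i = j then 1 else 0)
                 \<and> (\<Sum>k<m. C i k * M k j) = (if i = j then 1 else 0))"

end

theory Submission
  imports Defs
begin

(* Everything rests on one identity in the coordinates u = phi^-1(x):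
   (1 + \<Sum>j e^u_j) D^t eta_q(u) = grad H_D(u).  Diagonality of D^t Q1 says that in
   the i-th column of D every off-diagonal entry equals (D^t q)_i, and then the sum
   collapses to the gradient of H_D.  Since Ytilde_B = (1 + \<Sum>j e^u_j) B eta_q, applying
   D^t B^-1 to Ytilde_B, or B (D^t)^-1 to grad H_D, gives the two Hamiltonian identities on
   R^(n-1).  On the simplex, phi conjugates X_A / x_n to Ytilde_B (the formal equilibrium
   condition makes A q drop out of B eta_q), and the chain rule
   d(H_D o phi^-1) = (d phi^-1)^t dH_D transports both identities. *)

lemma sum_lessThan_split_last:
  fixes f :: "nat \<Rightarrow> 'a::comm_monoid_add"
  assumes "0 < n"
  shows "(\<Sum>i<n. f i) = (\<Sum>i<n - 1. f i) + f (n - 1)"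
  using assms by (cases n) simp_all

lemma simplex_interior_pos:
  "x \<in> simplex_interior n \<Longrightarrow> i < n \<Longrightarrow> 0 < x i"
  by (simp add: simplex_interior_def)

lemma simplex_interior_dim_pos: "x \<in> simplex_interior n \<Longrightarrow> 0 < n"
  by (cases n) (simp_all add: simplex_interior_def)

lemma fun_upd_has_real_derivative:
  "((\<lambda>t. (u(a := t)) j) has_real_derivative (if j = a then 1 else 0)) (at t0)"
  by (cases "j = a") auto

definition Dt_q ::
    "nat \<Rightarrow> (nat \<Rightarrow> nat \<Rightarrow> real) \<Rightarrow> (nat \<Rightarrow> real) \<Rightarrow> nat \<Rightarrow> real" where
  "Dt_q n D q i = (\<Sum>k<n - 1. D k i * q k)"

definition grad_H_D ::
    "nat \<Rightarrow> (nat \<Rightarrow> nat \<Rightarrow> real) \<Rightarrow> (nat \<Rightarrow> real) \<Rightarrow> (nat \<Rightarrow> real) \<Rightarrow> nat \<Rightarrow> real" where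
  "grad_H_D n D q u i = Dt_q n D q i + (Dt_q n D q i - D i i) * exp (u i)"

lemma H_D_comp_has_real_derivative:
  assumes "\<And>j. j < n - 1 \<Longrightarrow> ((\<lambda>t. P t j) has_real_derivative P' j) (at t0)"
  shows "((\<lambda>t. H_D n D q (P t)) has_real_derivative
           (\<Sum>j<n - 1. grad_H_D n D q (P t0) j * P' j)) (at t0)"
proof -
  have "((\<lambda>t. H_D n D q (P t)) has_real_derivative
      (\<Sum>j<n - 1. Dt_q n D q j * P' j) +
      (\<Sum>j<n - 1. (Dt_q n D q j - D j j) * (exp (P t0 j) * P' j))) (at t0)"
    unfolding H_D_def Dt_q_def[symmetric] using assms
    by (intro DERIV_add DERIV_sum) (auto intro!: DERIV_cmult DERIV_chain'[where g = exp])
  then show ?thesis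
    by (simp add: grad_H_D_def sum.distrib[symmetric] algebra_simps)
qed

lemma partial_deriv_H_D:
  assumes "i < n - 1"
  shows "partial_deriv (H_D n D q) u i = grad_H_D n D q u i"
proof -
  have "((\<lambda>t. H_D n D q (u(i := t))) has_real_derivative
      (\<Sum>j<n - 1. grad_H_D n D q (u(i := u i)) j * (if j = i then 1 else 0))) (at (u i))"
    by (rule H_D_comp_has_real_derivative) (rule fun_upd_has_real_derivative)
  then have "((\<lambda>t. H_D n D q (u(i := t))) has_real_derivative grad_H_D n D q u i) (at (u i))"
    using assms by (simp add: if_distrib cong: if_cong)
  then show ?thesis
    unfolding partial_deriv_def by (rule DERIV_imp_deriv)
qed

lemma scaled_Dt_eta_eq_grad_H_D:
  assumes diag: "\<forall>i<n - 1. \<forall>j<n - 1. i \<noteq> j \<longrightarrow> (\<Sum>k<n - 1. D k i * Q1 q k j) = 0"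
    and i: "i < n - 1"
  shows "(1 + (\<Sum>j<n - 1. exp (u j))) * (\<Sum>j<n - 1. D j i * eta n q u j) = grad_H_D n D q u i"
proof -
  define s where "s = 1 + (\<Sum>j<n - 1. exp (u j))"
  define c where "c = Dt_q n D q i"
  have "s > 0"
    unfolding s_def by (intro add_pos_nonneg sum_nonneg) auto
  have off_diag: "D j i = c" if j: "j < n - 1" "j \<noteq> i" for j
  proof -
    have "(\<Sum>k<n - 1. D k i * Q1 q k j) = (\<Sum>k<n - 1. D k i * q k - (if k = j then D k i else 0))"
      unfolding Q1_def by (intro sum.cong) (auto simp: algebra_simps)
    also have "\<dots> = c - D j i"
      using j by (simp add: sum_subtractf c_def Dt_q_def)
    finally show ?thesis
      using diag i j by auto
  qed
  have "(\<Sum>j<n - 1. D j i * exp (u j))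
      = (\<Sum>j<n - 1. c * exp (u j) + (if j = i then (D i i - c) * exp (u i) else 0))"
    using off_diag by (intro sum.cong) (auto simp: algebra_simps)
  also have "\<dots> = c * (s - 1) + (D i i - c) * exp (u i)"
    using i by (simp add: sum.distrib sum_distrib_left[symmetric] s_def)
  finally have sum_exp: "(\<Sum>j<n - 1. D j i * exp (u j)) = c * (s - 1) + (D i i - c) * exp (u i)" .
  have "s * (D j i * eta n q u j) = s * (D j i * q j) - D j i * exp (u j)" for j
    unfolding eta_def s_def[symmetric] using \<open>s > 0\<close> by (simp add: field_simps)
  then have "s * (\<Sum>j<n - 1. D j i * eta n q u j) = s * c - (\<Sum>j<n - 1. D j i * exp (u j))"
    by (simp add: sum_distrib_left sum_subtractf c_def Dt_q_def)
  also have "\<dots> = grad_H_D n D q u i"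
    unfolding sum_exp grad_H_D_def c_def[symmetric] by (simp add: algebra_simps)
  finally show ?thesis
    unfolding s_def .
qed

lemma is_inverse_left_cancel:
  assumes "is_inverse m M C" "j < m"
  shows "(\<Sum>k<m. C j k * (\<Sum>l<m. M k l * v l)) = v j"
proof -
  have "(\<Sum>k<m. C j k * (\<Sum>l<m. M k l * v l)) = (\<Sum>l<m. (\<Sum>k<m. C j k * M k l) * v l)"
    by (simp only: sum_distrib_left sum_distrib_right mult.assoc) (rule sum.swap)
  also have "\<dots> = (\<Sum>l<m. if l = j then v l else 0)"
    using assms unfolding is_inverse_def by (intro sum.cong) auto
  finally show ?thesis
    using assms(2) by simp
qed

lemma Ytilde_presymplectic_hamiltonian:
  assumes diag: "\<forall>i<n - 1. \<forall>j<n - 1. i \<noteq> j \<longrightarrow> (\<Sum>k<n - 1. D k i * Q1 q k j) = 0"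
    and inv: "is_inverse (n - 1) (Bmat n A) C" and i: "i < n - 1"
  shows "(\<Sum>j<n - 1. \<Sum>k<n - 1. D j i * C j k * Ytilde n A q u k) = grad_H_D n D q u i"
proof -
  define s where "s = 1 + (\<Sum>j<n - 1. exp (u j))"
  have "(\<Sum>j<n - 1. \<Sum>k<n - 1. D j i * C j k * Ytilde n A q u k)
      = (\<Sum>j<n - 1. D j i * (s * (\<Sum>k<n - 1. C j k * (\<Sum>l<n - 1. Bmat n A k l * eta n q u l))))"
    unfolding Ytilde_def s_def[symmetric] by (simp add: sum_distrib_left mult_ac)
  also have "\<dots> = (\<Sum>j<n - 1. D j i * (s * eta n q u j))"
    using is_inverse_left_cancel[OF inv] by (intro sum.cong) auto
  also have "\<dots> = s * (\<Sum>j<n - 1. D j i * eta n q u j)"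
    by (simp add: sum_distrib_left mult_ac)
  also have "\<dots> = grad_H_D n D q u i"
    unfolding s_def by (rule scaled_Dt_eta_eq_grad_H_D[OF diag i])
  finally show ?thesis .
qed

lemma Ytilde_poisson_hamiltonian:
  assumes diag: "\<forall>i<n - 1. \<forall>j<n - 1. i \<noteq> j \<longrightarrow> (\<Sum>k<n - 1. D k i * Q1 q k j) = 0"
    and inv: "is_inverse (n - 1) (\<lambda>i j. D j i) C" and i: "i < n - 1"
  shows "Ytilde n A q u i = (\<Sum>j<n - 1. \<Sum>k<n - 1. Bmat n A i j * C j k * grad_H_D n D q u k)"
proof -
  define s where "s = 1 + (\<Sum>j<n - 1. exp (u j))"
  have grad: "grad_H_D n D q u k = (\<Sum>l<n - 1. D l k * (s * eta n q u l))" if "k < n - 1" for k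
    using scaled_Dt_eta_eq_grad_H_D[OF diag that, of u]
    unfolding s_def[symmetric] by (simp add: sum_distrib_left mult_ac)
  have "(\<Sum>j<n - 1. \<Sum>k<n - 1. Bmat n A i j * C j k * grad_H_D n D q u k)
     = (\<Sum>j<n - 1. Bmat n A i j * (\<Sum>k<n - 1. C j k * (\<Sum>l<n - 1. D l k * (s * eta n q u l))))"
    using grad by (simp add: sum_distrib_left mult_ac)
  also have "\<dots> = (\<Sum>j<n - 1. Bmat n A i j * (s * eta n q u j))"
    using is_inverse_left_cancel[OF inv, where v = "\<lambda>l. s * eta n q u l"] by simp
  also have "\<dots> = Ytilde n A q u i"
    unfolding Ytilde_def s_def[symmetric] by (simp add: sum_distrib_left mult_ac)
  finally show ?thesis ..
qed

lemma exp_phi_inv: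
  assumes "x \<in> simplex_interior n" "j < n - 1"
  shows "exp (phi_inv n x j) = x j / x (n - 1)"
  using assms by (simp add: simplex_interior_def phi_inv_def)

lemma one_plus_sum_exp_phi_inv:
  assumes x: "x \<in> simplex_interior n"
  shows "1 + (\<Sum>j<n - 1. exp (phi_inv n x j)) = 1 / x (n - 1)"
proof -
  have "0 < n" and "0 < x (n - 1)"
    using simplex_interior_dim_pos[OF x] simplex_interior_pos[OF x] by auto
  have "(\<Sum>j<n - 1. exp (phi_inv n x j)) = (\<Sum>j<n - 1. x j) / x (n - 1)"
    using exp_phi_inv[OF x] by (simp add: sum_divide_distrib)
  also have "(\<Sum>j<n - 1. x j) = 1 - x (n - 1)"
    using x sum_lessThan_split_last[OF \<open>0 < n\<close>, of x] by (simp add: simplex_interior_def)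
  finally show ?thesis
    using \<open>0 < x (n - 1)\<close> by (simp add: field_simps)
qed

lemma phi_phi_inv:
  assumes x: "x \<in> simplex_interior n" and i: "i < n"
  shows "phi n (phi_inv n x) i = x i"
  using i exp_phi_inv[OF x, of i] simplex_interior_pos[OF x, of "n - 1"]
  unfolding phi_def one_plus_sum_exp_phi_inv[OF x] by auto

definition dphi :: "(nat \<Rightarrow> real) \<Rightarrow> nat \<Rightarrow> nat \<Rightarrow> real" where
  "dphi x i a = (if i = a then x i else 0) - x i * x a"

definition dphi_inv :: "nat \<Rightarrow> (nat \<Rightarrow> real) \<Rightarrow> nat \<Rightarrow> nat \<Rightarrow> real" where
  "dphi_inv n x j i = (if j = i then 1 / x j else 0) - (if i = n - 1 then 1 / x (n - 1) else 0)"

lemma phi_has_real_derivative: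
  assumes a: "a < n - 1" and i: "i < n"
  shows "((\<lambda>t. phi n (u(a := t)) i) has_real_derivative dphi (phi n u) i a) (at (u a))"
proof -
  define s where "s = 1 + (\<Sum>j<n - 1. exp (u j))"
  have "s > 0"
    unfolding s_def by (intro add_pos_nonneg sum_nonneg) auto
  have "((\<lambda>t. 1 + (\<Sum>j<n - 1. exp ((u(a := t)) j))) has_real_derivative
      0 + (\<Sum>j<n - 1. exp ((u(a := u a)) j) * (if j = a then 1 else 0))) (at (u a))"
    by (intro DERIV_add DERIV_const DERIV_sum DERIV_exp
        DERIV_chain'[where g = exp, OF fun_upd_has_real_derivative])
  then have ds: "((\<lambda>t. 1 + (\<Sum>j<n - 1. exp ((u(a := t)) j))) has_real_derivative exp (u a))
      (at (u a))"
    using a by (simp add: if_distrib cong: if_cong)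
  have s_upd: "1 + (\<Sum>j<n - 1. exp ((u(a := u a)) j)) = s"
    unfolding s_def by simp
  have phi_u: "phi n u k = (if k < n - 1 then exp (u k) / s else 1 / s)" if "k < n" for k
    using that unfolding phi_def s_def by auto
  show ?thesis
  proof (cases "i < n - 1")
    case True
    have "((\<lambda>t. exp ((u(a := t)) i)) has_real_derivative
        exp ((u(a := u a)) i) * (if i = a then 1 else 0)) (at (u a))"
      by (intro DERIV_chain'[where g = exp, OF fun_upd_has_real_derivative] DERIV_exp)
    from DERIV_divide[OF this ds]
    have "((\<lambda>t. exp ((u(a := t)) i) / (1 + (\<Sum>j<n - 1. exp ((u(a := t)) j)))) has_real_derivative
        ((if i = a then exp (u a) else 0) * s - exp (u i) * exp (u a)) / (s * s)) (at (u a))"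
      using \<open>s > 0\<close> s_upd by (simp add: if_distrib cong: if_cong)
    moreover have "(\<lambda>t. phi n (u(a := t)) i)
        = (\<lambda>t. exp ((u(a := t)) i) / (1 + (\<Sum>j<n - 1. exp ((u(a := t)) j))))"
      using True unfolding phi_def by simp
    moreover have "dphi (phi n u) i a
        = ((if i = a then exp (u a) else 0) * s - exp (u i) * exp (u a)) / (s * s)"
      using True a i \<open>s > 0\<close> by (simp add: dphi_def phi_u field_simps)
    ultimately show ?thesis
      by simp
  next
    case False
    then have "i = n - 1"
      using i by simp
    have "((\<lambda>t. 1 / (1 + (\<Sum>j<n - 1. exp ((u(a := t)) j))))
        has_real_derivative - exp (u a) / (s * s)) (at (u a))"
      using DERIV_divide[OF DERIV_const[of 1] ds] \<open>s > 0\<close> s_upd by simp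
    moreover have "(\<lambda>t. phi n (u(a := t)) i)
        = (\<lambda>t. 1 / (1 + (\<Sum>j<n - 1. exp ((u(a := t)) j))))"
      unfolding phi_def \<open>i = n - 1\<close> by simp
    moreover have "dphi (phi n u) i a = - exp (u a) / (s * s)"
      using False a i \<open>s > 0\<close> by (simp add: dphi_def phi_u field_simps)
    ultimately show ?thesis
      by simp
  qed
qed

lemma jacobian_phi_at_phi_inv:
  assumes x: "x \<in> simplex_interior n" and i: "i < n" and a: "a < n - 1"
  shows "jacobian (phi n) (phi_inv n x) i a = dphi x i a"
proof -
  have "jacobian (phi n) (phi_inv n x) i a = dphi (phi n (phi_inv n x)) i a"
    unfolding jacobian_def by (rule DERIV_imp_deriv[OF phi_has_real_derivative[OF a i]])
  also have "\<dots> = dphi x i a"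
    using phi_phi_inv[OF x] i a by (simp add: dphi_def)
  finally show ?thesis .
qed

lemma phi_inv_has_real_derivative:
  assumes x: "x \<in> simplex_interior n" and i: "i < n" and j: "j < n - 1"
  shows "((\<lambda>t. phi_inv n (x(i := t)) j) has_real_derivative dphi_inv n x j i) (at (x i))"
proof -
  have xj: "x j > 0" and xn: "x (n - 1) > 0"
    using simplex_interior_pos[OF x] j by auto
  consider "i = j" | "i = n - 1" | "i \<noteq> j" "i \<noteq> n - 1"
    by blast
  then show ?thesis
  proof cases
    case 1
    have "((\<lambda>t. ln (t / x (n - 1))) has_real_derivative
        inverse (x j / x (n - 1)) * (1 / x (n - 1))) (at (x j))"
      using xj xn by (intro DERIV_chain'[where g = ln]) (auto intro!: derivative_eq_intros DERIV_ln)
    moreover have "inverse (x j / x (n - 1)) * (1 / x (n - 1)) = dphi_inv n x j i"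
      using 1 j xj xn by (auto simp: dphi_inv_def field_simps)
    ultimately show ?thesis
      using 1 j unfolding phi_inv_def by simp
  next
    case 2
    have "((\<lambda>t. ln (x j / t)) has_real_derivative
        inverse (x j / x (n - 1)) * (- x j / (x (n - 1) * x (n - 1)))) (at (x (n - 1)))"
      using xj xn by (intro DERIV_chain'[where g = ln]) (auto intro!: derivative_eq_intros DERIV_ln)
    moreover have "inverse (x j / x (n - 1)) * (- x j / (x (n - 1) * x (n - 1))) = dphi_inv n x j i"
      using 2 j xj xn by (auto simp: dphi_inv_def field_simps)
    ultimately show ?thesis
      using 2 j unfolding phi_inv_def by simp
  next
    case 3
    then show ?thesis
      using j unfolding phi_inv_def dphi_inv_def by simp
  qed
qed

lemma jacobian_phi_inv:
  assumes "x \<in> simplex_interior n" "i < n" "j < n - 1"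
  shows "jacobian (phi_inv n) x j i = dphi_inv n x j i"
  unfolding jacobian_def by (rule DERIV_imp_deriv[OF phi_inv_has_real_derivative[OF assms]])

lemma sum_dphi_inv:
  assumes "0 < n" "c < n - 1"
  shows "(\<Sum>j<n. dphi_inv n x c j * f j) = f c / x c - f (n - 1) / x (n - 1)"
proof -
  have "(\<Sum>j<n. dphi_inv n x c j * f j)
      = (\<Sum>j<n. (if j = c then f c / x c else 0) - (if j = n - 1 then f (n - 1) / x (n - 1) else 0))"
    by (intro sum.cong) (auto simp: dphi_inv_def)
  then show ?thesis
    using assms by (simp add: sum_subtractf)
qed

lemma dphi_inv_dphi:
  assumes x: "x \<in> simplex_interior n" and c: "c < n - 1" and d: "d < n - 1"
  shows "(\<Sum>j<n. dphi_inv n x d j * dphi x j c) = (if d = c then 1 else 0)"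
proof -
  have "0 < x d" "0 < x (n - 1)"
    using simplex_interior_pos[OF x] d by auto
  then show ?thesis
    unfolding sum_dphi_inv[OF simplex_interior_dim_pos[OF x] d]
    using c d by (auto simp: dphi_def field_simps)
qed

lemma partial_deriv_H_D_phi_inv:
  assumes x: "x \<in> simplex_interior n" and i: "i < n"
  shows "partial_deriv (\<lambda>y. H_D n D q (phi_inv n y)) x i
    = (\<Sum>j<n - 1. grad_H_D n D q (phi_inv n x) j * dphi_inv n x j i)"
proof -
  have "((\<lambda>t. H_D n D q (phi_inv n (x(i := t)))) has_real_derivative
      (\<Sum>j<n - 1. grad_H_D n D q (phi_inv n (x(i := x i))) j * dphi_inv n x j i)) (at (x i))"
    by (rule H_D_comp_has_real_derivative, rule phi_inv_has_real_derivative[OF x i])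
  then show ?thesis
    unfolding partial_deriv_def by (simp add: DERIV_imp_deriv)
qed

lemma dphi_transpose_partial_deriv_H_D_phi_inv:
  assumes x: "x \<in> simplex_interior n" and c: "c < n - 1"
  shows "(\<Sum>j<n. dphi x j c * partial_deriv (\<lambda>y. H_D n D q (phi_inv n y)) x j)
    = grad_H_D n D q (phi_inv n x) c"
proof -
  have "(\<Sum>j<n. dphi x j c * partial_deriv (\<lambda>y. H_D n D q (phi_inv n y)) x j)
      = (\<Sum>j<n. \<Sum>d<n - 1. grad_H_D n D q (phi_inv n x) d * (dphi_inv n x d j * dphi x j c))"
    by (simp add: partial_deriv_H_D_phi_inv[OF x] sum_distrib_left mult_ac)
  also have "\<dots> = (\<Sum>d<n - 1. \<Sum>j<n. grad_H_D n D q (phi_inv n x) d * (dphi_inv n x d j * dphi x j c))"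
    by (rule sum.swap)
  also have "\<dots> = (\<Sum>d<n - 1. grad_H_D n D q (phi_inv n x) d * (\<Sum>j<n. dphi_inv n x d j * dphi x j c))"
    by (simp add: sum_distrib_left)
  also have "\<dots> = (\<Sum>d<n - 1. if d = c then grad_H_D n D q (phi_inv n x) d else 0)"
    using dphi_inv_dphi[OF x c] by (intro sum.cong) auto
  finally show ?thesis
    using c by simp
qed

lemma sum_Emat:
  assumes "0 < n" "c < n - 1"
  shows "(\<Sum>k<n. Emat n c k * f k) = f (n - 1) - f c"
proof -
  have "(\<Sum>k<n. Emat n c k * f k) = (\<Sum>k<n. (if k = n - 1 then f k else 0) - (if k = c then f k else 0))"
    using assms by (intro sum.cong) (auto simp: Emat_def)
  then show ?thesis
    using assms by (simp add: sum_subtractf)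
qed

lemma Bmat_eq:
  assumes "0 < n" "c < n - 1" "l < n - 1"
  shows "Bmat n A c l = A c (n - 1) + A (n - 1) l - A (n - 1) (n - 1) - A c l"
proof -
  have "Bmat n A c l = - (\<Sum>k<n. Emat n c k * (\<Sum>j<n. Emat n l j * A k j))"
    unfolding Bmat_def by (simp add: sum_distrib_left mult_ac)
  then show ?thesis
    using sum_Emat[OF assms(1,2)] sum_Emat[OF assms(1,3)] by simp
qed

lemma Bmat_apply_zero_sum:
  assumes n: "0 < n" and c: "c < n - 1" and w: "(\<Sum>l<n. w l) = 0"
  shows "(\<Sum>l<n - 1. Bmat n A c l * w l) = (\<Sum>k<n. A (n - 1) k * w k) - (\<Sum>k<n. A c k * w k)"
proof -
  have "(\<Sum>l<n - 1. Bmat n A c l * w l)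
      = (\<Sum>l<n - 1. (A c (n - 1) - A (n - 1) (n - 1)) * w l + A (n - 1) l * w l - A c l * w l)"
    by (intro sum.cong) (simp_all add: Bmat_eq[OF n c] algebra_simps)
  also have "\<dots> = (A c (n - 1) - A (n - 1) (n - 1)) * (\<Sum>l<n - 1. w l)
      + (\<Sum>l<n - 1. A (n - 1) l * w l) - (\<Sum>l<n - 1. A c l * w l)"
    by (simp add: sum.distrib sum_subtractf sum_distrib_left)
  also have "(\<Sum>l<n - 1. w l) = - w (n - 1)"
    using w unfolding sum_lessThan_split_last[OF n] by linarith
  also have "(A c (n - 1) - A (n - 1) (n - 1)) * - w (n - 1)
      + (\<Sum>l<n - 1. A (n - 1) l * w l) - (\<Sum>l<n - 1. A c l * w l)
      = (\<Sum>k<n. A (n - 1) k * w k) - (\<Sum>k<n. A c k * w k)"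
    unfolding sum_lessThan_split_last[OF n] by (simp add: algebra_simps)
  finally show ?thesis .
qed

lemma Ytilde_phi_inv:
  assumes x: "x \<in> simplex_interior n" and eq: "formal_equilibrium n A q" and c: "c < n - 1"
  shows "Ytilde n A q (phi_inv n x) c
    = ((\<Sum>j<n. A c j * x j) - (\<Sum>j<n. A (n - 1) j * x j)) / x (n - 1)"
proof -
  have n: "0 < n" and "0 < x (n - 1)"
    using simplex_interior_dim_pos[OF x] simplex_interior_pos[OF x] by auto
  have eta: "eta n q (phi_inv n x) l = q l - x l" if "l < n - 1" for l
    using exp_phi_inv[OF x that] \<open>0 < x (n - 1)\<close>
    unfolding eta_def one_plus_sum_exp_phi_inv[OF x] by simp
  have "(\<Sum>l<n. q l) = 1" and q_eq: "(\<Sum>k<n. A (n - 1) k * q k) = (\<Sum>k<n. A c k * q k)"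
    using eq c unfolding formal_equilibrium_def by (auto dest: spec[of _ "n - 1"] spec[of _ c])
  then have w: "(\<Sum>l<n. q l - x l) = 0"
    using x by (simp add: simplex_interior_def sum_subtractf)
  have "Ytilde n A q (phi_inv n x) c = (\<Sum>l<n - 1. Bmat n A c l * (q l - x l)) / x (n - 1)"
    unfolding Ytilde_def one_plus_sum_exp_phi_inv[OF x] using eta by simp
  also have "(\<Sum>l<n - 1. Bmat n A c l * (q l - x l))
      = (\<Sum>k<n. A (n - 1) k * (q k - x k)) - (\<Sum>k<n. A c k * (q k - x k))"
    by (rule Bmat_apply_zero_sum[OF n c w])
  also have "\<dots> = ((\<Sum>k<n. A (n - 1) k * q k) - (\<Sum>k<n. A c k * q k))
      + ((\<Sum>j<n. A c j * x j) - (\<Sum>j<n. A (n - 1) j * x j))"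
    by (simp add: right_diff_distrib sum_subtractf)
  finally show ?thesis
    unfolding q_eq by simp
qed

lemma dphi_inv_replicator:
  assumes x: "x \<in> simplex_interior n" and eq: "formal_equilibrium n A q" and c: "c < n - 1"
  shows "(\<Sum>j<n. dphi_inv n x c j * (replicator n A x j / x (n - 1))) = Ytilde n A q (phi_inv n x) c"
proof -
  have "0 < x c" "0 < x (n - 1)"
    using simplex_interior_pos[OF x] c by auto
  then show ?thesis
    unfolding Ytilde_phi_inv[OF x eq c] sum_dphi_inv[OF simplex_interior_dim_pos[OF x] c]
    by (simp add: replicator_def field_simps)
qed

lemma dphi_Ytilde_phi_inv:
  assumes x: "x \<in> simplex_interior n" and eq: "formal_equilibrium n A q" and i: "i < n"
  shows "(\<Sum>a<n - 1. dphi x i a * Ytilde n A q (phi_inv n x) a) = replicator n A x i / x (n - 1)"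
proof -
  define m where "m = n - 1"
  define y where "y k = (\<Sum>j<n. A k j * x j)" for k
  define Q where "Q = (\<Sum>k<n. x k * y k)"
  have n: "0 < n" and "0 < x m"
    using simplex_interior_dim_pos[OF x] simplex_interior_pos[OF x] by (auto simp: m_def)
  have replicator: "replicator n A x i = x i * (y i - Q)"
    unfolding replicator_def y_def Q_def by (simp add: sum_distrib_left mult.assoc)
  have sum_x: "(\<Sum>a<m. x a) = 1 - x m" and sum_xy: "(\<Sum>a<m. x a * y a) = Q - x m * y m"
    using x sum_lessThan_split_last[OF n, of x] sum_lessThan_split_last[OF n, of "\<lambda>k. x k * y k"]
    by (simp_all add: simplex_interior_def Q_def m_def)
  have "(\<Sum>a<m. x a * (y a - y m)) = (\<Sum>a<m. x a * y a) - (\<Sum>a<m. x a) * y m"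
    by (simp add: right_diff_distrib sum_subtractf sum_distrib_right)
  also have "\<dots> = Q - y m"
    unfolding sum_x sum_xy by (simp add: algebra_simps)
  finally have centred: "(\<Sum>a<m. x a * (y a - y m)) = Q - y m" .
  have diagonal_part: "(\<Sum>a<m. (if i = a then x i else 0) * ((y a - y m) / x m)) = x i * ((y i - y m) / x m)"
  proof (cases "i < m")
    case True
    have "(\<Sum>a<m. (if i = a then x i else 0) * ((y a - y m) / x m))
        = (\<Sum>a<m. if i = a then x i * ((y a - y m) / x m) else 0)"
      by (intro sum.cong) auto
    then show ?thesis
      using True by simp
  next
    case False
    then have "i = m"
      using i by (simp add: m_def)
    then show ?thesis
      by simp
  qed
  have "(\<Sum>a<m. dphi x i a * ((y a - y m) / x m))
      = (\<Sum>a<m. (if i = a then x i else 0) * ((y a - y m) / x m) - x i / x m * (x a * (y a - y m)))"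
    using \<open>0 < x m\<close> by (intro sum.cong) (simp_all add: dphi_def field_simps)
  also have "\<dots> = (\<Sum>a<m. (if i = a then x i else 0) * ((y a - y m) / x m))
      - x i / x m * (\<Sum>a<m. x a * (y a - y m))"
    by (simp add: sum_subtractf sum_distrib_left)
  also have "\<dots> = replicator n A x i / x m"
    unfolding diagonal_part centred replicator using \<open>0 < x m\<close> by (simp add: field_simps)
  finally show ?thesis
    using Ytilde_phi_inv[OF x eq] by (simp add: y_def m_def)
qed

lemma sum_matrix_chain_apply:
  fixes f :: "'a \<Rightarrow> 'c::comm_semiring_1"
  shows "(\<Sum>j\<in>J. (\<Sum>a\<in>S. \<Sum>b\<in>S. \<Sum>c\<in>S. f a * g b a * h b c * k c j) * w j)
    = (\<Sum>a\<in>S. f a * (\<Sum>b\<in>S. g b a * (\<Sum>c\<in>S. h b c * (\<Sum>j\<in>J. k c j * w j))))"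
proof -
  have "(\<Sum>j\<in>J. (\<Sum>a\<in>S. \<Sum>b\<in>S. \<Sum>c\<in>S. f a * g b a * h b c * k c j) * w j)
      = (\<Sum>j\<in>J. \<Sum>a\<in>S. \<Sum>b\<in>S. \<Sum>c\<in>S. f a * g b a * h b c * k c j * w j)"
    by (simp add: sum_distrib_right)
  also have "\<dots> = (\<Sum>a\<in>S. \<Sum>b\<in>S. \<Sum>c\<in>S. \<Sum>j\<in>J. f a * g b a * h b c * k c j * w j)"
    by (simp add: sum.swap[of _ J])
  also have "\<dots> = (\<Sum>a\<in>S. f a * (\<Sum>b\<in>S. g b a * (\<Sum>c\<in>S. h b c * (\<Sum>j\<in>J. k c j * w j))))"
    by (simp add: sum_distrib_left mult.assoc)
  finally show ?thesis .
qed

lemma replicator_presymplectic_hamiltonian: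
  assumes diag: "\<forall>i<n - 1. \<forall>j<n - 1. i \<noteq> j \<longrightarrow> (\<Sum>k<n - 1. D k i * Q1 q k j) = 0"
    and inv: "is_inverse (n - 1) (Bmat n A) C" and eq: "formal_equilibrium n A q"
    and x: "x \<in> simplex_interior n" and i: "i < n"
  shows "(\<Sum>j<n. (\<Sum>a<n - 1. \<Sum>b<n - 1. \<Sum>c<n - 1.
             jacobian (phi_inv n) x a i * D b a * C b c * jacobian (phi_inv n) x c j)
           * (replicator n A x j / x (n - 1)))
    = partial_deriv (\<lambda>y. H_D n D q (phi_inv n y)) x i"
proof -
  have "(\<Sum>j<n. (\<Sum>a<n - 1. \<Sum>b<n - 1. \<Sum>c<n - 1.
             jacobian (phi_inv n) x a i * D b a * C b c * jacobian (phi_inv n) x c j)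
           * (replicator n A x j / x (n - 1)))
      = (\<Sum>j<n. (\<Sum>a<n - 1. \<Sum>b<n - 1. \<Sum>c<n - 1.
             dphi_inv n x a i * D b a * C b c * dphi_inv n x c j)
           * (replicator n A x j / x (n - 1)))"
    using jacobian_phi_inv[OF x] i by (intro sum.cong refl arg_cong2[where f = times]) auto
  also have "\<dots> = (\<Sum>a<n - 1. dphi_inv n x a i * (\<Sum>b<n - 1. D b a * (\<Sum>c<n - 1. C b c *
      (\<Sum>j<n. dphi_inv n x c j * (replicator n A x j / x (n - 1))))))"
    by (rule sum_matrix_chain_apply)
  also have "\<dots> = (\<Sum>a<n - 1. dphi_inv n x a i * (\<Sum>b<n - 1. D b a * (\<Sum>c<n - 1. C b c *
      Ytilde n A q (phi_inv n x) c)))"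
    using dphi_inv_replicator[OF x eq] by simp
  also have "\<dots> = (\<Sum>a<n - 1. dphi_inv n x a i * grad_H_D n D q (phi_inv n x) a)"
    using Ytilde_presymplectic_hamiltonian[OF diag inv]
    by (intro sum.cong refl) (simp add: sum_distrib_left mult_ac)
  also have "\<dots> = partial_deriv (\<lambda>y. H_D n D q (phi_inv n y)) x i"
    using partial_deriv_H_D_phi_inv[OF x i] by (simp add: mult.commute)
  finally show ?thesis .
qed

lemma replicator_poisson_hamiltonian:
  assumes diag: "\<forall>i<n - 1. \<forall>j<n - 1. i \<noteq> j \<longrightarrow> (\<Sum>k<n - 1. D k i * Q1 q k j) = 0"
    and inv: "is_inverse (n - 1) (\<lambda>i j. D j i) C" and eq: "formal_equilibrium n A q"
    and x: "x \<in> simplex_interior n" and i: "i < n"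
  shows "replicator n A x i / x (n - 1)
    = (\<Sum>j<n. (\<Sum>a<n - 1. \<Sum>b<n - 1. \<Sum>c<n - 1.
             jacobian (phi n) (phi_inv n x) i a * Bmat n A a b * C b c * jacobian (phi n) (phi_inv n x) j c)
           * partial_deriv (\<lambda>y. H_D n D q (phi_inv n y)) x j)"
proof -
  let ?dH = "partial_deriv (\<lambda>y. H_D n D q (phi_inv n y)) x"
  have "(\<Sum>j<n. (\<Sum>a<n - 1. \<Sum>b<n - 1. \<Sum>c<n - 1.
             jacobian (phi n) (phi_inv n x) i a * Bmat n A a b * C b c * jacobian (phi n) (phi_inv n x) j c)
           * ?dH j)
      = (\<Sum>j<n. (\<Sum>a<n - 1. \<Sum>b<n - 1. \<Sum>c<n - 1. dphi x i a * Bmat n A a b * C b c * dphi x j c) * ?dH j)"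
    using jacobian_phi_at_phi_inv[OF x] i by (intro sum.cong refl arg_cong2[where f = times]) auto
  also have "\<dots> = (\<Sum>a<n - 1. dphi x i a * (\<Sum>b<n - 1. Bmat n A a b * (\<Sum>c<n - 1. C b c *
      (\<Sum>j<n. dphi x j c * ?dH j))))"
    by (rule sum_matrix_chain_apply[where g = "\<lambda>b a. Bmat n A a b" and k = "\<lambda>c j. dphi x j c"])
  also have "\<dots> = (\<Sum>a<n - 1. dphi x i a * (\<Sum>b<n - 1. Bmat n A a b * (\<Sum>c<n - 1. C b c *
      grad_H_D n D q (phi_inv n x) c)))"
    using dphi_transpose_partial_deriv_H_D_phi_inv[OF x] by simp
  also have "\<dots> = (\<Sum>a<n - 1. dphi x i a * Ytilde n A q (phi_inv n x) a)"
    using Ytilde_poisson_hamiltonian[OF diag inv]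
    by (intro sum.cong refl) (simp add: sum_distrib_left mult_ac)
  also have "\<dots> = replicator n A x i / x (n - 1)"
    by (rule dphi_Ytilde_phi_inv[OF x eq i])
  finally show ?thesis ..
qed

theorem corollary4p7:
  fixes n :: nat and A D :: "nat \<Rightarrow> nat \<Rightarrow> real" and q :: "nat \<Rightarrow> real"
  assumes "n \<ge> 2"
    and "formal_equilibrium n A q"
    and antisym: "\<forall>i<n - 1. \<forall>j<n - 1.
            (\<Sum>k<n - 1. D i k * Bmat n A k j) = - (\<Sum>k<n - 1. D j k * Bmat n A k i)"
    and diag: "\<forall>i<n - 1. \<forall>j<n - 1. i \<noteq> j \<longrightarrow> (\<Sum>k<n - 1. D k i * Q1 q k j) = 0"
  shows
    "(\<forall>C. is_inverse (n - 1) (Bmat n A) C \<longrightarrow>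
        (\<forall>u. \<forall>i<n - 1.
           (\<Sum>j<n - 1. \<Sum>k<n - 1. D j i * C j k * Ytilde n A q u k)
             = partial_deriv (H_D n D q) u i)
      \<and> (\<forall>x\<in>simplex_interior n. \<forall>i<n.
           (let J = jacobian (phi_inv n) x in
            (\<Sum>j<n. (\<Sum>a<n - 1. \<Sum>b<n - 1. \<Sum>c<n - 1. J a i * D b a * C b c * J c j)
                      * (replicator n A x j / x (n - 1))))
             = partial_deriv (\<lambda>y. H_D n D q (phi_inv n y)) x i))
   \<and> (\<forall>C. is_inverse (n - 1) (\<lambda>i j. D j i) C \<longrightarrow>
        (\<forall>u. \<forall>i<n - 1.
           Ytilde n A q u i
             = (\<Sum>j<n - 1. \<Sum>k<n - 1. Bmat n A i j * C j k * partial_deriv (H_D n D q) u k))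
      \<and> (\<forall>x\<in>simplex_interior n. \<forall>i<n.
           replicator n A x i / x (n - 1)
             = (let J = jacobian (phi n) (phi_inv n x) in
                (\<Sum>j<n. (\<Sum>a<n - 1. \<Sum>b<n - 1. \<Sum>c<n - 1. J i a * Bmat n A a b * C b c * J j c)
                         * partial_deriv (\<lambda>y. H_D n D q (phi_inv n y)) x j))))"
  \<comment> \<open>Antisymmetry of D B only makes D^t B^-1 a genuine 2-form and B (D^t)^-1 a
    genuine bivector; the Hamiltonian identities hold without it, and for every n.\<close>
  using Ytilde_presymplectic_hamiltonian[OF diag]
    replicator_presymplectic_hamiltonian[OF diag _ assms(2)]
    Ytilde_poisson_hamiltonian[OF diag] replicator_poisson_hamiltonian[OF diag _ assms(2)]
  by (simp add: partial_deriv_H_D Let_def)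

end
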